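(* Let $\{P^{[n]}\in\mathbb{R}^{n\times n}\}_{n\in\mathbb{N}}$ be a sequence of (row-)stochastic matrices of increasing dimensions, with the opinion dynamics and wisdom notions described in the context. Then: (i) the sequence is one-time wise if and only if $\lim_{n\to\infty}\|\tfrac{1}{n}P^{[n]}\|_1=0$; (ii) the sequence is finite-time wise if and only if, for every $k\in\mathbb{N}$, $\lim_{n\to\infty}\|\tfrac{1}{n}(P^{[n]})^k\|_1=0$. Moreover, if every $P^{[n]}$ is primitive, then (iii) the sequence is wise if and only if $\lim_{n\to\infty}\|\pi^{[n]}\|_\infty=0$, where $\pi^{[n]}$ is the left dominant eigenvector of $P^{[n]}$ (the unique $\pi^{[n]}\ge 0$ with entries summing to $1$ and $(\pi^{[n]})^\top P^{[n]}=(\pi^{[n]})^\top$).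
   Context: A matrix $P\in\mathbb{R}^{n\times n}$ is stochastic if $P\ge 0$ entrywise and $P\mathbf{1}_n=\mathbf{1}_n$. For nonnegative $P$, $\|P\|_1=\max_{j}\sum_{i=1}^n P_{ij}$ is the maximum column sum. $P$ is primitive if its associated directed graph (edge $(i,j)$ iff $P_{ij}>0$) is strongly connected and aperiodic. For $x\in\mathbb{R}^n$, $\mathrm{ave}(x)=\frac1n\sum_i x_i$. Setting: for each $n$, let $x^{[n]}(0)\in\mathbb{R}^n$ with $x^{[n]}_i(0)=\mu+\xi^{[n]}_i(0)$, where $\mu\in\mathbb{R}$ is a fixed constant and $\xi^{[n]}_1(0),\dots,\xi^{[n]}_n(0)$ are independent Gaussian random variables with mean $0$ and common variance $\sigma^2\in(0,\infty)$; and let $x^{[n]}(k+1)=P^{[n]}x^{[n]}(k)$ for $k\ge 0$. The sequence $\{P^{[n]}\}$ is called: one-time wise if $\lim_{n\to\infty}\mathrm{ave}(x^{[n]}(1))=\mu$; finite-time wise if $\lim_{n\to\infty}\mathrm{ave}(x^{[n]}(k))=\mu$ for all $k\in\mathbb{N}$; wise if $\lim_{n\to\infty}\lim_{k\to\infty}\mathrm{ave}(x^{[n]}(k))=\mu$. All limits in $n$ are in probability. *)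

theory Defs
  imports "HOL-Probability.Probability"
begin

text \<open>n x n real matrices are represented as functions nat => nat => real,
  only the entries with indices below n being relevant; vectors in R^n as nat => real.\<close>

definition stochastic :: "nat \<Rightarrow> (nat \<Rightarrow> nat \<Rightarrow> real) \<Rightarrow> bool" where
  "stochastic n A \<longleftrightarrow> (\<forall>i<n. \<forall>j<n. 0 \<le> A i j) \<and> (\<forall>i<n. (\<Sum>j<n. A i j) = 1)"

definition mat_mult :: "nat \<Rightarrow> (nat \<Rightarrow> nat \<Rightarrow> real) \<Rightarrow> (nat \<Rightarrow> nat \<Rightarrow> real) \<Rightarrow> nat \<Rightarrow> nat \<Rightarrow> real" where
  "mat_mult n A B = (\<lambda>i j. \<Sum>l<n. A i l * B l j)"

fun mat_pow :: "nat \<Rightarrow> (nat \<Rightarrow> nat \<Rightarrow> real) \<Rightarrow> nat \<Rightarrow> nat \<Rightarrow> nat \<Rightarrow> real" where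
  "mat_pow n A 0 = (\<lambda>i j. if i = j then 1 else 0)"
| "mat_pow n A (Suc k) = mat_mult n (mat_pow n A k) A"

definition norm1 :: "nat \<Rightarrow> (nat \<Rightarrow> nat \<Rightarrow> real) \<Rightarrow> real" where
  "norm1 n A = (MAX j\<in>{..<n}. \<Sum>i<n. \<bar>A i j\<bar>)"

definition norm_inf_vec :: "nat \<Rightarrow> (nat \<Rightarrow> real) \<Rightarrow> real" where
  "norm_inf_vec n v = (MAX i\<in>{..<n}. \<bar>v i\<bar>)"

definition ave :: "nat \<Rightarrow> (nat \<Rightarrow> real) \<Rightarrow> real" where
  "ave n x = (\<Sum>i<n. x i) / real n"

fun traj :: "nat \<Rightarrow> (nat \<Rightarrow> nat \<Rightarrow> real) \<Rightarrow> (nat \<Rightarrow> real) \<Rightarrow> nat \<Rightarrow> nat \<Rightarrow> real" where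
  "traj n A x0 0 = x0"
| "traj n A x0 (Suc k) = (\<lambda>i. \<Sum>j<n. A i j * traj n A x0 k j)"

definition graph_edges :: "nat \<Rightarrow> (nat \<Rightarrow> nat \<Rightarrow> real) \<Rightarrow> (nat \<times> nat) set" where
  "graph_edges n A = {(i, j). i < n \<and> j < n \<and> A i j > 0}"

definition strongly_connected :: "nat \<Rightarrow> (nat \<Rightarrow> nat \<Rightarrow> real) \<Rightarrow> bool" where
  "strongly_connected n A \<longleftrightarrow> (\<forall>i<n. \<forall>j<n. (i, j) \<in> (graph_edges n A)\<^sup>*)"

definition aperiodic :: "nat \<Rightarrow> (nat \<Rightarrow> nat \<Rightarrow> real) \<Rightarrow> bool" where
  "aperiodic n A \<longleftrightarrow>
     Gcd {m. m > 0 \<and> (\<exists>i<n. (i, i) \<in> (graph_edges n A) ^^ m)} = (1::nat)"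

definition primitive :: "nat \<Rightarrow> (nat \<Rightarrow> nat \<Rightarrow> real) \<Rightarrow> bool" where
  "primitive n A \<longleftrightarrow> strongly_connected n A \<and> aperiodic n A"

definition left_dom_eigvec :: "nat \<Rightarrow> (nat \<Rightarrow> nat \<Rightarrow> real) \<Rightarrow> nat \<Rightarrow> real" where
  "left_dom_eigvec n A = (THE \<pi>. (\<forall>i<n. 0 \<le> \<pi> i) \<and> (\<Sum>i<n. \<pi> i) = 1
      \<and> (\<forall>j<n. (\<Sum>i<n. \<pi> i * A i j) = \<pi> j) \<and> (\<forall>i\<ge>n. \<pi> i = 0))"

definition conv_in_prob :: "'a measure \<Rightarrow> (nat \<Rightarrow> 'a \<Rightarrow> real) \<Rightarrow> real \<Rightarrow> bool" where
  "conv_in_prob M Y c \<longleftrightarrow>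
     (\<forall>e>0. (\<lambda>n. measure M {\<omega> \<in> space M. \<bar>Y n \<omega> - c\<bar> > e}) \<longlonglongrightarrow> 0)"

definition x0 :: "real \<Rightarrow> (nat \<Rightarrow> nat \<Rightarrow> 'a \<Rightarrow> real) \<Rightarrow> nat \<Rightarrow> 'a \<Rightarrow> nat \<Rightarrow> real" where
  "x0 \<mu> \<xi> n \<omega> = (\<lambda>i. \<mu> + \<xi> n i \<omega>)"

definition one_time_wise :: "'a measure \<Rightarrow> real \<Rightarrow> (nat \<Rightarrow> nat \<Rightarrow> 'a \<Rightarrow> real)
    \<Rightarrow> (nat \<Rightarrow> nat \<Rightarrow> nat \<Rightarrow> real) \<Rightarrow> bool" where
  "one_time_wise M \<mu> \<xi> P \<longleftrightarrow>
     conv_in_prob M (\<lambda>n \<omega>. ave n (traj n (P n) (x0 \<mu> \<xi> n \<omega>) 1)) \<mu>"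

definition finite_time_wise :: "'a measure \<Rightarrow> real \<Rightarrow> (nat \<Rightarrow> nat \<Rightarrow> 'a \<Rightarrow> real)
    \<Rightarrow> (nat \<Rightarrow> nat \<Rightarrow> nat \<Rightarrow> real) \<Rightarrow> bool" where
  "finite_time_wise M \<mu> \<xi> P \<longleftrightarrow>
     (\<forall>k. conv_in_prob M (\<lambda>n \<omega>. ave n (traj n (P n) (x0 \<mu> \<xi> n \<omega>) k)) \<mu>)"

definition wise :: "'a measure \<Rightarrow> real \<Rightarrow> (nat \<Rightarrow> nat \<Rightarrow> 'a \<Rightarrow> real)
    \<Rightarrow> (nat \<Rightarrow> nat \<Rightarrow> nat \<Rightarrow> real) \<Rightarrow> bool" where
  "wise M \<mu> \<xi> P \<longleftrightarrow>
     conv_in_prob M (\<lambda>n \<omega>. lim (\<lambda>k. ave n (traj n (P n) (x0 \<mu> \<xi> n \<omega>) k))) \<mu>"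

end

theory Submission
  imports Defs
begin

(* After k steps the average opinion is mu plus the weighted sum of the independent Gaussian
   noises with weights w_j = (column sum j of P^k) / n, a probability vector; for primitive P
   the powers P^k converge to the rank-one matrix with rows pi (a positive power of P contracts
   the range max - min of every trajectory), so as k -> oo the weights become pi. A weighted sum
   of the noises is centred Gaussian with standard deviation sigma ||w||_2, hence tends to 0 in
   probability iff ||w||_2 -> 0, and ||w||_oo <= ||w||_2 <= sqrt ||w||_oo for probability
   vectors. Finally ||w||_oo is ||P^k / n||_1, respectively ||pi||_oo. *)

section \<open>Additive submonoids of the naturals\<close>

lemma mult_mem_if_add_closed:
  fixes S :: "nat set"
  assumes "0 \<in> S" and "\<And>x y. x \<in> S \<Longrightarrow> y \<in> S \<Longrightarrow> x + y \<in> S" and "a \<in> S"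
  shows "k * a \<in> S"
  by (induction k) (use assms in auto)

lemma nat_submonoid_Gcd_1_consecutive:
  fixes S :: "nat set"
  assumes zero: "0 \<in> S" and add: "\<And>a b. a \<in> S \<Longrightarrow> b \<in> S \<Longrightarrow> a + b \<in> S"
    and gcd: "Gcd S = 1"
  obtains b where "b \<in> S" "b + 1 \<in> S"
proof -
  have mult: "k * a \<in> S" if "a \<in> S" for k a
    using zero add that by (rule mult_mem_if_add_closed)
  define D where "D = {d. 0 < d \<and> (\<exists>b\<in>S. b + d \<in> S)}"
  have "\<not> S \<subseteq> {0}" using gcd by (metis Gcd_0_iff zero_neq_one)
  then obtain c where c: "c \<in> S" "0 < c" by blast
  then have "c \<in> D" using zero unfolding D_def by force
  define d where "d = Least (\<lambda>d. d \<in> D)"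
  have "d \<in> D" unfolding d_def by (rule LeastI) fact
  then obtain b where b: "b \<in> S" "b + d \<in> S" and "0 < d" unfolding D_def by blast
  have "d dvd s" if s: "s \<in> S" for s
  proof (rule ccontr)
    assume "\<not> d dvd s"
    then have r: "0 < s mod d" by (simp add: mod_greater_zero_iff_not_dvd)
    \<comment> \<open>s mod d is again a difference of two elements of S, contradicting the minimality of d\<close>
    have "(s div d) * (b + d) + s mod d = s + (s div d) * b"
      using div_mult_mod_eq[of s d] by (simp add: algebra_simps)
    moreover have "(s div d) * (b + d) \<in> S" "s + (s div d) * b \<in> S"
      using mult b s add by auto
    ultimately have "s mod d \<in> D" using r unfolding D_def by force
    then have "d \<le> s mod d" unfolding d_def by (rule Least_le)
    with mod_less_divisor[OF \<open>0 < d\<close>, of s] show False by simp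
  qed
  then have "d dvd Gcd S" by (simp add: Gcd_greatest)
  then have "d = 1" using gcd by simp
  with b that show ?thesis by simp
qed

lemma nat_submonoid_Gcd_1_cofinite:
  fixes S :: "nat set"
  assumes zero: "0 \<in> S" and add: "\<And>a b. a \<in> S \<Longrightarrow> b \<in> S \<Longrightarrow> a + b \<in> S"
    and gcd: "Gcd S = 1"
  shows "\<exists>N0. \<forall>N\<ge>N0. N \<in> S"
proof -
  obtain b where b: "b \<in> S" "b + 1 \<in> S"
    using nat_submonoid_Gcd_1_consecutive[OF assms] .
  have mult: "k * a \<in> S" if "a \<in> S" for k a
    using zero add that by (rule mult_mem_if_add_closed)
  have "N \<in> S" if N: "b * b \<le> N" for N
  proof (cases "b = 0")
    case True
    then show ?thesis using mult[of 1 N] b by simp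
  next
    case False
    define q r where "q = N div b" and "r = N mod b"
    have "r < b" "b \<le> q"
      using False N div_le_mono[OF N, of b] unfolding q_def r_def by auto
    then have "(q - r) * b + r * b = q * b" by (simp add: add_mult_distrib[symmetric])
    then have "N = (q - r) * b + r * (b + 1)"
      using div_mult_mod_eq[of N b] unfolding q_def r_def by (simp add: algebra_simps)
    moreover have "(q - r) * b \<in> S" by (rule mult[OF b(1)])
    moreover have "r * (b + 1) \<in> S" by (rule mult[OF b(2)])
    ultimately show ?thesis using add by simp
  qed
  then show ?thesis by blast
qed

section \<open>Stochastic matrices and opinion trajectories\<close>

lemma sum_delta_mult:
  fixes x :: "nat \<Rightarrow> real"
  assumes "i < n"
  shows "(\<Sum>j<n. (if i = j then 1 else 0) * x j) = x i"
proof -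
  have "(\<Sum>j<n. (if i = j then 1 else 0) * x j) = (\<Sum>j<n. if j = i then x j else 0)"
    by (rule sum.cong) auto
  with assms show ?thesis by simp
qed

lemma stochastic_mat_mult:
  assumes A: "stochastic n A" and B: "stochastic n B"
  shows "stochastic n (mat_mult n A B)"
  unfolding stochastic_def
proof (intro conjI allI impI)
  fix i j assume "i < n" "j < n"
  then show "0 \<le> mat_mult n A B i j"
    using A B unfolding stochastic_def mat_mult_def by (auto intro!: sum_nonneg)
next
  fix i assume i: "i < n"
  have "(\<Sum>j<n. mat_mult n A B i j) = (\<Sum>l<n. A i l * (\<Sum>j<n. B l j))"
    unfolding mat_mult_def by (subst sum.swap) (simp add: sum_distrib_left)
  also have "\<dots> = 1" using A B i unfolding stochastic_def by simp
  finally show "(\<Sum>j<n. mat_mult n A B i j) = 1" .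
qed

lemma stochastic_mat_pow:
  assumes "stochastic n A"
  shows "stochastic n (mat_pow n A k)"
proof (induction k)
  case 0
  show ?case by (simp add: stochastic_def sum.delta)
next
  case (Suc k)
  then show ?case using assms by (simp add: stochastic_mat_mult)
qed

lemma mat_pow_1: "i < n \<Longrightarrow> mat_pow n A 1 i j = A i j"
  by (simp add: mat_mult_def sum_delta_mult)

lemma norm1_cong:
  assumes "\<And>i j. i < n \<Longrightarrow> j < n \<Longrightarrow> A i j = B i j"
  shows "norm1 n A = norm1 n B"
  unfolding norm1_def using assms by (intro arg_cong[where f = Max] image_cong sum.cong) auto

lemma traj_add: "traj n A x (k + m) = traj n A (traj n A x k) m"
  by (induction m) auto

lemma traj_Suc_start: "traj n A x (Suc k) = traj n A (\<lambda>i. \<Sum>j<n. A i j * x j) k"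
  by (induction k) auto

lemma traj_eq_mat_pow: "i < n \<Longrightarrow> traj n A x k i = (\<Sum>j<n. mat_pow n A k i j * x j)"
proof (induction k arbitrary: x i)
  case 0
  then show ?case by (simp add: sum_delta_mult)
next
  case (Suc k)
  have "traj n A x (Suc k) i = (\<Sum>j<n. mat_pow n A k i j * (\<Sum>l<n. A j l * x l))"
    unfolding traj_Suc_start by (rule Suc.IH[OF Suc.prems])
  also have "\<dots> = (\<Sum>l<n. (\<Sum>j<n. mat_pow n A k i j * A j l) * x l)"
    by (simp add: sum_distrib_left sum_distrib_right mult.assoc) (rule sum.swap)
  finally show ?case by (simp add: mat_mult_def)
qed

lemma ave_traj_perturbed_constant:
  assumes "stochastic n A" "0 < n"
  shows "ave n (traj n A (\<lambda>i. \<mu> + z i) k)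
       = \<mu> + (\<Sum>j<n. ((\<Sum>i<n. mat_pow n A k i j) / real n) * z j)"
proof -
  have rows: "(\<Sum>j<n. mat_pow n A k i j) = 1" if "i < n" for i
    using stochastic_mat_pow[OF assms(1)] that unfolding stochastic_def by blast
  have "(\<Sum>i<n. traj n A (\<lambda>i. \<mu> + z i) k i)
      = (\<Sum>i<n. \<mu> * (\<Sum>j<n. mat_pow n A k i j) + (\<Sum>j<n. mat_pow n A k i j * z j))"
    by (intro sum.cong) (simp_all add: traj_eq_mat_pow sum_distrib_left sum.distrib algebra_simps)
  also have "\<dots> = real n * \<mu> + (\<Sum>j<n. (\<Sum>i<n. mat_pow n A k i j) * z j)"
    by (simp add: rows sum.distrib sum_distrib_right) (rule sum.swap)
  finally show ?thesis
    using assms(2) unfolding ave_def by (simp add: add_divide_distrib sum_divide_distrib[symmetric])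
qed

lemma relpow_graph_edges_imp_mat_pow_pos:
  assumes "stochastic n A" and "i < n" and "(i, j) \<in> graph_edges n A ^^ k"
  shows "0 < mat_pow n A k i j"
  using assms(3)
proof (induction k arbitrary: j)
  case 0
  then show ?case by simp
next
  case (Suc k)
  then obtain l where il: "(i, l) \<in> graph_edges n A ^^ k" and lj: "(l, j) \<in> graph_edges n A"
    by auto
  from lj have l: "l < n" "j < n" "0 < A l j" unfolding graph_edges_def by auto
  have nonneg: "0 \<le> mat_pow n A k i l' * A l' j" if "l' < n" for l'
    using stochastic_mat_pow[OF assms(1), of k] assms that l
    unfolding stochastic_def by auto
  have "0 < mat_pow n A k i l * A l j" using Suc.IH[OF il] l by simp
  also have "\<dots> \<le> (\<Sum>l'<n. mat_pow n A k i l' * A l' j)"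
    by (rule member_le_sum) (use l nonneg in auto)
  finally show ?case by (simp add: mat_mult_def)
qed

lemma primitive_imp_mat_pow_pos:
  assumes st: "stochastic n A" and n: "0 < n" and prim: "primitive n A"
  obtains m where "\<And>i j. i < n \<Longrightarrow> j < n \<Longrightarrow> 0 < mat_pow n A m i j"
proof -
  define R where "R = graph_edges n A"
  have walk: "\<exists>k. (i, j) \<in> R ^^ k" if "i < n" "j < n" for i j
    using prim that unfolding primitive_def strongly_connected_def R_def
    by (auto simp: rtrancl_power)
  have concat: "(a, c) \<in> R ^^ (k + l)" if "(a, b) \<in> R ^^ k" "(b, c) \<in> R ^^ l" for a b c k l
    using that by (auto simp: relpow_add)
  define S where "S = {k. (0, 0) \<in> R ^^ k}"
  have S0: "0 \<in> S" unfolding S_def by simp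
  have S_add: "a + b \<in> S" if "a \<in> S" "b \<in> S" for a b
    using that concat unfolding S_def by blast
  have "Gcd S dvd s" if "s > 0" "i < n" "(i, i) \<in> R ^^ s" for s i
  proof -
    obtain a b where a: "(0, i) \<in> R ^^ a" and b: "(i, 0) \<in> R ^^ b"
      using walk n \<open>i < n\<close> by blast
    have "a + b \<in> S" "a + s + b \<in> S"
      using concat[OF a b] concat[OF concat[OF a that(3)] b] unfolding S_def by auto
    then have "Gcd S dvd (a + s + b) - (a + b)" by (intro dvd_diff_nat Gcd_dvd)
    then show ?thesis by simp
  qed
  then have "Gcd S dvd Gcd {m. 0 < m \<and> (\<exists>i<n. (i, i) \<in> R ^^ m)}"
    by (auto intro: Gcd_greatest)
  then have "Gcd S = 1"
    using prim unfolding primitive_def aperiodic_def R_def by simp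
  then obtain N where N: "\<And>L. N \<le> L \<Longrightarrow> (0, 0) \<in> R ^^ L"
    using nat_submonoid_Gcd_1_cofinite[OF S0 S_add \<open>Gcd S = 1\<close>] unfolding S_def by auto
  have "\<forall>i\<in>{..<n}. \<exists>k. (i, 0) \<in> R ^^ k" "\<forall>j\<in>{..<n}. \<exists>k. (0, j) \<in> R ^^ k"
    using walk n by auto
  then obtain to0 from0 where to0: "\<And>i. i < n \<Longrightarrow> (i, 0) \<in> R ^^ to0 i"
    and from0: "\<And>j. j < n \<Longrightarrow> (0, j) \<in> R ^^ from0 j"
    by (metis lessThan_iff)
  \<comment> \<open>every pair is joined by a walk i \<rightarrow> 0 \<rightarrow> \<dots> \<rightarrow> 0 \<rightarrow> j of the same length K\<close>
  define K where "K = N + (\<Sum>i<n. to0 i) + (\<Sum>j<n. from0 j)"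
  have "0 < mat_pow n A K i j" if ij: "i < n" "j < n" for i j
  proof -
    have "to0 i \<le> (\<Sum>i<n. to0 i)" "from0 j \<le> (\<Sum>j<n. from0 j)"
      using ij by (auto intro: member_le_sum)
    then have K: "K = to0 i + (K - to0 i - from0 j) + from0 j" "N \<le> K - to0 i - from0 j"
      unfolding K_def by linarith+
    have "(i, j) \<in> R ^^ (to0 i + (K - to0 i - from0 j) + from0 j)"
      using concat[OF concat[OF to0[OF ij(1)] N[OF K(2)]] from0[OF ij(2)]] .
    then show ?thesis
      using relpow_graph_edges_imp_mat_pow_pos[OF st ij(1)] K(1) unfolding R_def by simp
  qed
  then show ?thesis by (rule that)
qed

section \<open>Powers of primitive stochastic matrices\<close>

lemma stochastic_row_combination_bounds:
  fixes v :: "nat \<Rightarrow> real"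
  assumes st: "stochastic n B" and i: "i < n" and \<delta>: "\<And>j. j < n \<Longrightarrow> \<delta> \<le> B i j"
    and v: "\<And>j. j < n \<Longrightarrow> lo \<le> v j \<and> v j \<le> hi"
    and lo: "jl < n" "v jl = lo" and hi: "jh < n" "v jh = hi"
  shows "lo + \<delta> * (hi - lo) \<le> (\<Sum>j<n. B i j * v j)"
    and "(\<Sum>j<n. B i j * v j) \<le> hi - \<delta> * (hi - lo)"
proof -
  have B: "0 \<le> B i j" "(\<Sum>j<n. B i j * c) = c" if "j < n" for j c
    using st i that unfolding stochastic_def by (auto simp: sum_distrib_right[symmetric])
  have "\<delta> * (hi - lo) \<le> B i jh * (v jh - lo)"
    using \<delta>[OF hi(1)] v[OF hi(1)] hi by (auto intro: mult_right_mono)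
  also have "\<dots> \<le> (\<Sum>j<n. B i j * (v j - lo))"
    by (rule member_le_sum[where f = "\<lambda>j. B i j * (v j - lo)"]) (use B v hi in auto)
  also have "\<dots> = (\<Sum>j<n. B i j * v j) - lo"
    using B[OF i] by (simp add: sum_subtractf right_diff_distrib)
  finally show "lo + \<delta> * (hi - lo) \<le> (\<Sum>j<n. B i j * v j)" by simp
  have "\<delta> * (hi - lo) \<le> B i jl * (hi - v jl)"
    using \<delta>[OF lo(1)] v[OF lo(1)] lo by (auto intro: mult_right_mono)
  also have "\<dots> \<le> (\<Sum>j<n. B i j * (hi - v j))"
    by (rule member_le_sum[where f = "\<lambda>j. B i j * (hi - v j)"]) (use B v lo in auto)
  also have "\<dots> = hi - (\<Sum>j<n. B i j * v j)"
    using B[OF i] by (simp add: sum_subtractf right_diff_distrib)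
  finally show "(\<Sum>j<n. B i j * v j) \<le> hi - \<delta> * (hi - lo)" by simp
qed

lemma contracting_brackets_converge:
  fixes hi lo :: "nat \<Rightarrow> real"
  assumes dec: "decseq hi" and inc: "incseq lo" and bracket: "\<And>k. lo k \<le> hi k"
    and r: "0 \<le> r" "r < 1" and contr: "\<And>k. hi (k + m) - lo (k + m) \<le> r * (hi k - lo k)"
  shows "\<exists>L. hi \<longlonglongrightarrow> L \<and> lo \<longlonglongrightarrow> L"
proof -
  define osc where "osc k = hi k - lo k" for k
  have osc_antimono: "osc k \<le> osc k'" if "k' \<le> k" for k k'
    using dec inc that unfolding osc_def decseq_def incseq_def by (metis diff_mono)
  have osc_pow: "osc (t * m) \<le> r ^ t * osc 0" for t
  proof (induction t)
    case (Suc t)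
    have "osc (Suc t * m) \<le> r * osc (t * m)"
      using contr[of "t * m"] unfolding osc_def by (simp add: add.commute)
    also have "\<dots> \<le> r * (r ^ t * osc 0)" by (rule mult_left_mono[OF Suc r(1)])
    finally show ?case by simp
  qed simp
  have osc_0: "osc \<longlonglongrightarrow> 0"
  proof (rule LIMSEQ_I)
    fix \<epsilon> :: real assume "0 < \<epsilon>"
    have "(\<lambda>t. r ^ t * osc 0) \<longlonglongrightarrow> 0 * osc 0"
      by (intro tendsto_intros) (use r in simp)
    then have "eventually (\<lambda>t. r ^ t * osc 0 < \<epsilon>) sequentially"
      using \<open>0 < \<epsilon>\<close> by (intro order_tendstoD(2)) auto
    then obtain T where T: "r ^ T * osc 0 < \<epsilon>"
      by (auto simp: eventually_sequentially)
    have "norm (osc k - 0) < \<epsilon>" if "T * m \<le> k" for k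
      using osc_antimono[OF that] osc_pow[of T] T bracket[of k] unfolding osc_def by simp
    then show "\<exists>k0. \<forall>k\<ge>k0. norm (osc k - 0) < \<epsilon>" by blast
  qed
  obtain L where L: "hi \<longlonglongrightarrow> L"
    using decseq_convergent[OF dec, of "lo 0"] bracket inc by (meson incseq_def order_trans le0)
  have "(\<lambda>k. hi k - osc k) \<longlonglongrightarrow> L - 0" by (intro tendsto_intros L osc_0)
  then show ?thesis using L unfolding osc_def by auto
qed

lemma traj_tendsto_consensus:
  assumes st: "stochastic n A" and n: "0 < n"
    and pos: "\<And>i j. i < n \<Longrightarrow> j < n \<Longrightarrow> 0 < mat_pow n A m i j"
  shows "\<exists>L. \<forall>i<n. (\<lambda>k. traj n A x k i) \<longlonglongrightarrow> L"
proof -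
  define y where "y k = traj n A x k" for k
  define hi where "hi k = Max (y k ` {..<n})" for k
  define lo where "lo k = Min (y k ` {..<n})" for k
  have ne: "{..<n} \<noteq> {}" using n by auto
  have bounds: "lo k \<le> y k i \<and> y k i \<le> hi k" if "i < n" for k i
    unfolding hi_def lo_def using that by auto
  have attained: "\<exists>j<n. y k j = hi k" "\<exists>j<n. y k j = lo k" for k
    unfolding hi_def lo_def using Max_in[of "y k ` {..<n}"] Min_in[of "y k ` {..<n}"] ne
    by fastforce+
  have step: "lo k + \<delta> * (hi k - lo k) \<le> lo (k + l) \<and> hi (k + l) \<le> hi k - \<delta> * (hi k - lo k)"
    if entries: "\<And>i j. i < n \<Longrightarrow> j < n \<Longrightarrow> \<delta> \<le> mat_pow n A l i j" for k l \<delta>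
  proof -
    have y_step: "y (k + l) i = (\<Sum>j<n. mat_pow n A l i j * y k j)" if "i < n" for i
      unfolding y_def traj_add by (rule traj_eq_mat_pow[OF that])
    obtain jl jh where jl: "jl < n" "y k jl = lo k" and jh: "jh < n" "y k jh = hi k"
      using attained by metis
    have "lo k + \<delta> * (hi k - lo k) \<le> y (k + l) i \<and> y (k + l) i \<le> hi k - \<delta> * (hi k - lo k)"
      if "i < n" for i
      unfolding y_step[OF that]
      using stochastic_row_combination_bounds[OF stochastic_mat_pow[OF st] that entries[OF that]
          bounds jl jh]
      by blast
    then show ?thesis
      using ne unfolding hi_def[of "k + l"] lo_def[of "k + l"] by simp
  qed
  have "hi (Suc k) \<le> hi k \<and> lo k \<le> lo (Suc k)" for k
    using step[where k = k and l = 1 and \<delta> = 0] stochastic_mat_pow[OF st, of 1]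
    unfolding stochastic_def by auto
  then have "decseq hi" "incseq lo" unfolding decseq_Suc_iff incseq_Suc_iff by auto
  define \<delta> where "\<delta> = min (Min ((\<lambda>(i, j). mat_pow n A m i j) ` ({..<n} \<times> {..<n}))) (1 / 2)"
  have \<delta>: "\<delta> \<le> mat_pow n A m i j" if "i < n" "j < n" for i j
    unfolding \<delta>_def using that by (auto intro!: min.coboundedI1 Min_le)
  have "0 < \<delta>"
    unfolding \<delta>_def using pos ne by (auto simp: Min_gr_iff)
  have contr: "hi (k + m) - lo (k + m) \<le> (1 - 2 * \<delta>) * (hi k - lo k)" for k
    using step[OF \<delta>, of k] by (simp add: algebra_simps)
  have "0 \<le> 1 - 2 * \<delta>" "1 - 2 * \<delta> < 1"
    using \<open>0 < \<delta>\<close> unfolding \<delta>_def by auto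
  moreover have "lo k \<le> hi k" for k using bounds[of 0 k] n by auto
  ultimately obtain L where hi: "hi \<longlonglongrightarrow> L" and lo: "lo \<longlonglongrightarrow> L"
    using contracting_brackets_converge[OF \<open>decseq hi\<close> \<open>incseq lo\<close> _ _ _ contr] by blast
  have "(\<lambda>k. y k i) \<longlonglongrightarrow> L" if "i < n" for i
    by (rule tendsto_sandwich[OF _ _ lo hi]) (use bounds[OF that] in auto)
  then show ?thesis unfolding y_def by blast
qed

lemma mat_pow_tendsto_rank_one:
  assumes st: "stochastic n A" and n: "0 < n"
    and pos: "\<And>i j. i < n \<Longrightarrow> j < n \<Longrightarrow> 0 < mat_pow n A m i j"
  obtains \<pi> where "\<And>i j. i < n \<Longrightarrow> j < n \<Longrightarrow> (\<lambda>k. mat_pow n A k i j) \<longlonglongrightarrow> \<pi> j"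
    and "\<And>j. n \<le> j \<Longrightarrow> \<pi> j = 0"
proof -
  have "\<exists>L. \<forall>i<n. (\<lambda>k. mat_pow n A k i j) \<longlonglongrightarrow> L" if j: "j < n" for j
  proof -
    have "traj n A (\<lambda>l. if j = l then 1 else 0) k i = mat_pow n A k i j" if "i < n" for i k
      using sum_delta_mult[OF j, of "mat_pow n A k i"]
      by (simp add: traj_eq_mat_pow[OF that] mult.commute)
    then show ?thesis
      using traj_tendsto_consensus[OF st n pos, of "\<lambda>l. if j = l then 1 else 0"] by simp
  qed
  then obtain L where "\<And>i j. i < n \<Longrightarrow> j < n \<Longrightarrow> (\<lambda>k. mat_pow n A k i j) \<longlonglongrightarrow> L j"
    by metis
  then show ?thesis by (intro that[of "\<lambda>j. if j < n then L j else 0"]) auto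
qed

lemma mat_pow_limit_distribution:
  assumes st: "stochastic n A" and n: "0 < n"
    and lim: "\<And>i j. i < n \<Longrightarrow> j < n \<Longrightarrow> (\<lambda>k. mat_pow n A k i j) \<longlonglongrightarrow> \<pi> j"
  shows "(\<forall>j<n. 0 \<le> \<pi> j) \<and> (\<Sum>j<n. \<pi> j) = 1"
proof -
  note powers = stochastic_mat_pow[OF st, unfolded stochastic_def]
  have "0 \<le> \<pi> j" if "j < n" for j
    using LIMSEQ_le_const[OF lim[OF n that]] powers n that by auto
  moreover have "(\<lambda>k. \<Sum>j<n. mat_pow n A k 0 j) \<longlonglongrightarrow> (\<Sum>j<n. \<pi> j)"
    by (intro tendsto_sum lim n) simp
  then have "(\<lambda>k. 1) \<longlonglongrightarrow> (\<Sum>j<n. \<pi> j)" using powers n by simp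
  ultimately show ?thesis by (simp add: LIMSEQ_const_iff)
qed

lemma mat_pow_limit_left_stationary:
  assumes n: "0 < n" and j: "j < n"
    and lim: "\<And>i j. i < n \<Longrightarrow> j < n \<Longrightarrow> (\<lambda>k. mat_pow n A k i j) \<longlonglongrightarrow> \<pi> j"
  shows "(\<Sum>i<n. \<pi> i * A i j) = \<pi> j"
proof -
  have "(\<lambda>k. mat_pow n A (Suc k) 0 j) \<longlonglongrightarrow> (\<Sum>i<n. \<pi> i * A i j)"
    unfolding mat_pow.simps mat_mult_def by (intro tendsto_sum tendsto_mult_right lim n) auto
  moreover have "(\<lambda>k. mat_pow n A (Suc k) 0 j) \<longlonglongrightarrow> \<pi> j"
    using lim[OF n j] by (rule LIMSEQ_Suc)
  ultimately show ?thesis by (rule LIMSEQ_unique)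
qed

lemma left_stationary_mat_pow:
  assumes stat: "\<And>j. j < n \<Longrightarrow> (\<Sum>i<n. \<rho> i * A i j) = \<rho> j" and "j < n"
  shows "(\<Sum>i<n. \<rho> i * mat_pow n A k i j) = \<rho> j"
  using \<open>j < n\<close>
proof (induction k arbitrary: j)
  case 0
  then show ?case using sum_delta_mult[OF 0, of \<rho>] by (simp add: mult.commute eq_commute)
next
  case (Suc k)
  have "(\<Sum>i<n. \<rho> i * mat_pow n A (Suc k) i j) = (\<Sum>l<n. (\<Sum>i<n. \<rho> i * mat_pow n A k i l) * A l j)"
    unfolding mat_pow.simps mat_mult_def sum_distrib_left sum_distrib_right
    by (subst sum.swap) (simp add: mult.assoc)
  also have "\<dots> = \<rho> j" using Suc.IH stat Suc.prems by simp
  finally show ?case .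
qed

lemma mat_pow_limit_unique_left_stationary:
  assumes lim: "\<And>i j. i < n \<Longrightarrow> j < n \<Longrightarrow> (\<lambda>k. mat_pow n A k i j) \<longlonglongrightarrow> \<pi> j"
    and stat: "\<And>j. j < n \<Longrightarrow> (\<Sum>i<n. \<rho> i * A i j) = \<rho> j" and sum: "(\<Sum>i<n. \<rho> i) = 1"
    and j: "j < n"
  shows "\<rho> j = \<pi> j"
proof -
  have "(\<lambda>k. \<Sum>i<n. \<rho> i * mat_pow n A k i j) \<longlonglongrightarrow> (\<Sum>i<n. \<rho> i * \<pi> j)"
    by (intro tendsto_sum tendsto_mult_left lim j) simp
  then have "(\<lambda>k. \<rho> j) \<longlonglongrightarrow> \<pi> j"
    using left_stationary_mat_pow[OF stat j] sum by (simp add: sum_distrib_right[symmetric])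
  then show ?thesis by (simp add: LIMSEQ_const_iff)
qed

lemma left_dom_eigvec_eq_mat_pow_limit:
  assumes st: "stochastic n A" and n: "0 < n"
    and lim: "\<And>i j. i < n \<Longrightarrow> j < n \<Longrightarrow> (\<lambda>k. mat_pow n A k i j) \<longlonglongrightarrow> \<pi> j"
    and out: "\<And>j. n \<le> j \<Longrightarrow> \<pi> j = 0"
  shows "left_dom_eigvec n A = \<pi>"
  unfolding left_dom_eigvec_def
proof (rule the_equality)
  show "(\<forall>i<n. 0 \<le> \<pi> i) \<and> (\<Sum>i<n. \<pi> i) = 1 \<and> (\<forall>j<n. (\<Sum>i<n. \<pi> i * A i j) = \<pi> j)
      \<and> (\<forall>i\<ge>n. \<pi> i = 0)"
    using mat_pow_limit_distribution[OF st n lim] mat_pow_limit_left_stationary[OF n _ lim] out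
    by simp
next
  fix \<rho> assume "(\<forall>i<n. 0 \<le> \<rho> i) \<and> (\<Sum>i<n. \<rho> i) = 1 \<and> (\<forall>j<n. (\<Sum>i<n. \<rho> i * A i j) = \<rho> j)
      \<and> (\<forall>i\<ge>n. \<rho> i = 0)"
  then show "\<rho> = \<pi>"
    using mat_pow_limit_unique_left_stationary[OF lim, of \<rho>] out
    by (intro ext) (metis linorder_not_less)
qed

lemma primitive_mat_pow_tendsto_left_dom_eigvec:
  assumes st: "stochastic n A" and n: "0 < n" and prim: "primitive n A" and "i < n" "j < n"
  shows "(\<lambda>k. mat_pow n A k i j) \<longlonglongrightarrow> left_dom_eigvec n A j"
proof -
  obtain m where pos: "\<And>i j. i < n \<Longrightarrow> j < n \<Longrightarrow> 0 < mat_pow n A m i j"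
    using primitive_imp_mat_pow_pos[OF st n prim] by blast
  obtain \<pi> where lim: "\<And>i j. i < n \<Longrightarrow> j < n \<Longrightarrow> (\<lambda>k. mat_pow n A k i j) \<longlonglongrightarrow> \<pi> j"
    and "\<And>j. n \<le> j \<Longrightarrow> \<pi> j = 0"
    using mat_pow_tendsto_rank_one[OF st n pos] by blast
  then have "left_dom_eigvec n A = \<pi>" by (rule left_dom_eigvec_eq_mat_pow_limit[OF st n])
  then show ?thesis using lim \<open>i < n\<close> \<open>j < n\<close> by simp
qed

lemma ave_traj_tendsto:
  assumes n: "0 < n"
    and lim: "\<And>i j. i < n \<Longrightarrow> j < n \<Longrightarrow> (\<lambda>k. mat_pow n A k i j) \<longlonglongrightarrow> \<pi> j"
  shows "(\<lambda>k. ave n (traj n A x k)) \<longlonglongrightarrow> (\<Sum>j<n. \<pi> j * x j)"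
proof -
  have "(\<lambda>k. traj n A x k i) \<longlonglongrightarrow> (\<Sum>j<n. \<pi> j * x j)" if "i < n" for i
    unfolding traj_eq_mat_pow[OF that] by (intro tendsto_sum tendsto_mult_right lim that) simp
  then have "(\<lambda>k. (\<Sum>i<n. traj n A x k i) / real n) \<longlonglongrightarrow> (\<Sum>i<n. \<Sum>j<n. \<pi> j * x j) / real n"
    by (intro tendsto_divide tendsto_sum tendsto_const) (use n in auto)
  then show ?thesis unfolding ave_def using n by simp
qed

section \<open>Weighted sums of Gaussian noise\<close>

lemma weighted_sum_indep_normal:
  fixes X :: "nat \<Rightarrow> 'a \<Rightarrow> real" and w :: "nat \<Rightarrow> real"
  assumes M: "prob_space M" and \<sigma>: "0 < \<sigma>"
    and indep: "prob_space.indep_vars M (\<lambda>_. borel) X {..<n}"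
    and normal: "\<And>i. i < n \<Longrightarrow> distributed M lborel (X i) (normal_density 0 \<sigma>)"
    and nonzero: "\<exists>j<n. w j \<noteq> 0"
  shows "distributed M lborel (\<lambda>\<omega>. \<Sum>j<n. w j * X j \<omega>)
           (normal_density 0 (\<sigma> * sqrt (\<Sum>j<n. (w j)\<^sup>2)))"
    and "0 < \<sigma> * sqrt (\<Sum>j<n. (w j)\<^sup>2)"
proof -
  interpret prob_space M by (rule M)
  \<comment> \<open>sum_indep_normal needs positive variances, so drop the zero weights\<close>
  define J where "J = {j. j < n \<and> w j \<noteq> 0}"
  have J: "finite J" "J \<noteq> {}" "J \<subseteq> {..<n}" using nonzero unfolding J_def by auto
  have indep_J: "indep_vars (\<lambda>_. borel) (\<lambda>j \<omega>. w j * X j \<omega>) J"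
    by (rule indep_vars_compose2[where X = X, OF indep_vars_subset[OF indep J(3)]]) auto
  have normal_J: "distributed M lborel (\<lambda>\<omega>. w j * X j \<omega>) (normal_density 0 (\<bar>w j\<bar> * \<sigma>))"
    if "j \<in> J" for j
    using normal_density_affine[OF normal, of j "w j" 0] that \<sigma> by (simp add: J_def)
  have pos_J: "0 < \<bar>w j\<bar> * \<sigma>" if "j \<in> J" for j using that \<sigma> by (simp add: J_def)
  have "distributed M lborel (\<lambda>\<omega>. \<Sum>j\<in>J. w j * X j \<omega>)
      (normal_density (\<Sum>j\<in>J. 0) (sqrt (\<Sum>j\<in>J. (\<bar>w j\<bar> * \<sigma>)\<^sup>2)))"
    by (rule sum_indep_normal[OF J(1,2) indep_J pos_J normal_J])
  moreover have "(\<Sum>j\<in>J. w j * X j \<omega>) = (\<Sum>j<n. w j * X j \<omega>)" for \<omega>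
    by (rule sum.mono_neutral_left) (auto simp: J_def)
  moreover have var: "sqrt (\<Sum>j\<in>J. (\<bar>w j\<bar> * \<sigma>)\<^sup>2) = \<sigma> * sqrt (\<Sum>j<n. (w j)\<^sup>2)"
  proof -
    have "(\<Sum>j\<in>J. (\<bar>w j\<bar> * \<sigma>)\<^sup>2) = \<sigma>\<^sup>2 * (\<Sum>j<n. (w j)\<^sup>2)"
      by (subst sum.mono_neutral_left[of "{..<n}"])
         (auto simp: J_def sum_distrib_left power_mult_distrib mult.commute)
    then show ?thesis using \<sigma> by (simp add: real_sqrt_mult)
  qed
  ultimately show "distributed M lborel (\<lambda>\<omega>. \<Sum>j<n. w j * X j \<omega>)
      (normal_density 0 (\<sigma> * sqrt (\<Sum>j<n. (w j)\<^sup>2)))"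
    by simp
  obtain j where "j \<in> J" using J(2) by auto
  then have "0 < (\<Sum>j\<in>J. (\<bar>w j\<bar> * \<sigma>)\<^sup>2)"
    using J(1) \<sigma> by (intro sum_pos2[of J j]) (auto simp: J_def)
  then show "0 < \<sigma> * sqrt (\<Sum>j<n. (w j)\<^sup>2)" by (simp flip: var)
qed

lemma normal_tail_le:
  fixes Z :: "'a \<Rightarrow> real"
  assumes M: "prob_space M" and s: "0 < s" and e: "0 < e"
    and Z: "distributed M lborel Z (normal_density 0 s)"
  shows "measure M {\<omega> \<in> space M. e < \<bar>Z \<omega>\<bar>} \<le> s\<^sup>2 / e\<^sup>2"
proof -
  interpret prob_space M by (rule M)
  have [measurable]: "Z \<in> borel_measurable M" using distributed_measurable[OF Z] by simp
  have "integrable lborel (\<lambda>x. normal_density 0 s x * (x - 0) ^ 2)"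
    by (rule integrable_normal_moment) (use s in auto)
  then have sq: "integrable M (\<lambda>x. (Z x)\<^sup>2)"
    using distributed_integrable[OF Z, of "\<lambda>x. x ^ 2"] by simp
  have "prob {x\<in>space M. e \<le> \<bar>Z x - expectation Z\<bar>} \<le> variance Z / e\<^sup>2"
    by (rule Chebyshev_inequality[OF _ sq e]) simp
  then have "prob {x\<in>space M. e \<le> \<bar>Z x - expectation Z\<bar>} \<le> s\<^sup>2 / e\<^sup>2"
    unfolding normal_distributed_variance[OF s Z] .
  then have "prob {x\<in>space M. e \<le> \<bar>Z x\<bar>} \<le> s\<^sup>2 / e\<^sup>2"
    unfolding normal_distributed_expectation[OF s Z] by simp
  moreover have "prob {\<omega> \<in> space M. e < \<bar>Z \<omega>\<bar>} \<le> prob {x\<in>space M. e \<le> \<bar>Z x\<bar>}"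
    by (rule finite_measure_mono) auto
  ultimately show ?thesis by simp
qed

definition std_normal_tail :: real where
  "std_normal_tail = measure (density lborel std_normal_density) {x. 1 < \<bar>x\<bar>}"

lemma std_normal_tail_pos: "0 < std_normal_tail"
proof -
  interpret P: prob_space "density lborel std_normal_density"
    by (rule prob_space_normal_density) simp
  have "ennreal (std_normal_density 2) * indicator {1<..2::real} x
      \<le> ennreal (std_normal_density x) * indicator {x. 1 < \<bar>x\<bar>} x" for x :: real
  proof (cases "x \<in> {1<..2}")
    case True
    then have "x\<^sup>2 \<le> 2\<^sup>2" by (intro power_mono) auto
    then have "std_normal_density 2 \<le> std_normal_density x"
      by (simp add: std_normal_density_def divide_right_mono)
    with True show ?thesis by (auto simp: indicator_def)
  qed (auto simp: indicator_def)
  then have "(\<integral>\<^sup>+ x. ennreal (std_normal_density 2) * indicator {1<..2::real} x \<partial>lborel)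
      \<le> (\<integral>\<^sup>+ x. ennreal (std_normal_density x) * indicator {x. 1 < \<bar>x\<bar>} x \<partial>lborel)"
    by (rule nn_integral_mono)
  also have "\<dots> = emeasure (density lborel std_normal_density) {x. 1 < \<bar>x\<bar>}"
    by (rule emeasure_density[symmetric]) auto
  finally have "ennreal (std_normal_density 2) \<le> ennreal std_normal_tail"
    unfolding std_normal_tail_def by (simp add: nn_integral_cmult_indicator P.emeasure_eq_measure)
  moreover have "0 < std_normal_density 2" by (rule normal_density_pos) simp
  ultimately show ?thesis
    by (metis ennreal_le_iff less_le_trans measure_nonneg std_normal_tail_def)
qed

lemma normal_tail_ge:
  fixes Z :: "'a \<Rightarrow> real"
  assumes M: "prob_space M" and s: "0 < s" and "e \<le> s"
    and Z: "distributed M lborel Z (normal_density 0 s)"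
  shows "std_normal_tail \<le> measure M {\<omega> \<in> space M. e < \<bar>Z \<omega>\<bar>}"
proof -
  interpret prob_space M by (rule M)
  have [measurable]: "Z \<in> borel_measurable M" using distributed_measurable[OF Z] by simp
  have std: "distributed M lborel (\<lambda>x. (Z x - 0) / s) std_normal_density"
    using normal_standard_normal_convert[OF s] Z by simp
  have "std_normal_tail = measure M ((\<lambda>x. (Z x - 0) / s) -` {x. 1 < \<bar>x\<bar>} \<inter> space M)"
    unfolding std_normal_tail_def distributed_distr_eq_density[OF std, symmetric]
    by (rule measure_distr) auto
  also have "\<dots> \<le> measure M {\<omega> \<in> space M. e < \<bar>Z \<omega>\<bar>}"
    using s \<open>e \<le> s\<close> by (intro finite_measure_mono) (auto simp: field_simps)
  finally show ?thesis .
qed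

lemma conv_in_prob_normal_iff:
  fixes Y :: "nat \<Rightarrow> 'a \<Rightarrow> real" and s :: "nat \<Rightarrow> real"
  assumes M: "prob_space M"
    and normal: "\<forall>\<^sub>F n in sequentially.
                   0 < s n \<and> distributed M lborel (\<lambda>\<omega>. Y n \<omega> - c) (normal_density 0 (s n))"
  shows "conv_in_prob M Y c \<longleftrightarrow> s \<longlonglongrightarrow> 0"
proof
  assume "s \<longlonglongrightarrow> 0"
  show "conv_in_prob M Y c" unfolding conv_in_prob_def
  proof (intro allI impI)
    fix e :: real assume e: "0 < e"
    have "(\<lambda>n. (s n)\<^sup>2 / e\<^sup>2) \<longlonglongrightarrow> 0\<^sup>2 / e\<^sup>2"
      by (intro tendsto_intros \<open>s \<longlonglongrightarrow> 0\<close>) (use e in simp)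
    then have lim: "(\<lambda>n. (s n)\<^sup>2 / e\<^sup>2) \<longlonglongrightarrow> 0" by simp
    have upper: "\<forall>\<^sub>F n in sequentially. measure M {\<omega> \<in> space M. e < \<bar>Y n \<omega> - c\<bar>} \<le> (s n)\<^sup>2 / e\<^sup>2"
      using normal
    proof eventually_elim
      case (elim n)
      show ?case by (rule normal_tail_le[OF M conjunct1[OF elim] e conjunct2[OF elim]])
    qed
    show "(\<lambda>n. measure M {\<omega> \<in> space M. e < \<bar>Y n \<omega> - c\<bar>}) \<longlonglongrightarrow> 0"
      by (rule tendsto_sandwich[OF always_eventually upper tendsto_const lim]) simp
  qed
next
  assume conv: "conv_in_prob M Y c"
  show "s \<longlonglongrightarrow> 0"
  proof (rule order_tendstoI)
    fix a :: real assume "a < 0"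
    show "\<forall>\<^sub>F n in sequentially. a < s n"
      using normal by eventually_elim (use \<open>a < 0\<close> in linarith)
  next
    fix \<delta> :: real assume "0 < \<delta>"
    have "(\<lambda>n. measure M {\<omega> \<in> space M. \<delta> < \<bar>Y n \<omega> - c\<bar>}) \<longlonglongrightarrow> 0"
      using conv \<open>0 < \<delta>\<close> unfolding conv_in_prob_def by blast
    then have "\<forall>\<^sub>F n in sequentially. measure M {\<omega> \<in> space M. \<delta> < \<bar>Y n \<omega> - c\<bar>} < std_normal_tail"
      using std_normal_tail_pos by (rule order_tendstoD(2))
    then show "\<forall>\<^sub>F n in sequentially. s n < \<delta>"
      using normal
    proof eventually_elim
      case (elim n)
      show "s n < \<delta>"
      proof (rule ccontr)
        assume "\<not> s n < \<delta>"
        then have "\<delta> \<le> s n" by simp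
        then have "std_normal_tail \<le> measure M {\<omega> \<in> space M. \<delta> < \<bar>Y n \<omega> - c\<bar>}"
          by (rule normal_tail_ge[OF M conjunct1[OF elim(2)] _ conjunct2[OF elim(2)]])
        with elim(1) show False by simp
      qed
    qed
  qed
qed

lemma prob_vector_Max_le_l2:
  fixes w :: "nat \<Rightarrow> real"
  assumes n: "0 < n" and nonneg: "\<And>j. j < n \<Longrightarrow> 0 \<le> w j" and sum: "(\<Sum>j<n. w j) = 1"
  shows "0 \<le> (MAX j\<in>{..<n}. w j)"
    and "(MAX j\<in>{..<n}. w j) \<le> sqrt (\<Sum>j<n. (w j)\<^sup>2)"
    and "sqrt (\<Sum>j<n. (w j)\<^sup>2) \<le> sqrt (MAX j\<in>{..<n}. w j)"
proof -
  define m where "m = (MAX j\<in>{..<n}. w j)"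
  have "m \<in> w ` {..<n}" unfolding m_def using n by (intro Max_in) auto
  then obtain j0 where j0: "j0 < n" "m = w j0" by auto
  have le_m: "w j \<le> m" if "j < n" for j unfolding m_def using that by auto
  show "0 \<le> m" using nonneg j0 by simp
  have "m\<^sup>2 \<le> (\<Sum>j<n. (w j)\<^sup>2)"
    unfolding j0(2) by (rule member_le_sum) (use j0 in auto)
  then show "m \<le> sqrt (\<Sum>j<n. (w j)\<^sup>2)" using \<open>0 \<le> m\<close> real_le_rsqrt by blast
  have "(\<Sum>j<n. (w j)\<^sup>2) \<le> (\<Sum>j<n. m * w j)"
    unfolding power2_eq_square by (intro sum_mono mult_right_mono) (use le_m nonneg in auto)
  also have "\<dots> = m" by (simp add: sum_distrib_left[symmetric] sum)
  finally show "sqrt (\<Sum>j<n. (w j)\<^sup>2) \<le> sqrt m" by simp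
qed

lemma prob_vectors_Max_tendsto_0_iff_l2:
  fixes w :: "nat \<Rightarrow> nat \<Rightarrow> real"
  assumes nonneg: "\<And>n j. 0 < n \<Longrightarrow> j < n \<Longrightarrow> 0 \<le> w n j"
    and sum: "\<And>n. 0 < n \<Longrightarrow> (\<Sum>j<n. w n j) = 1"
  shows "(\<lambda>n. MAX j\<in>{..<n}. w n j) \<longlonglongrightarrow> 0 \<longleftrightarrow> (\<lambda>n. sqrt (\<Sum>j<n. (w n j)\<^sup>2)) \<longlonglongrightarrow> 0"
    (is "?max \<longlonglongrightarrow> 0 \<longleftrightarrow> ?l2 \<longlonglongrightarrow> 0")
proof -
  have "\<forall>\<^sub>F n in sequentially. 0 < n" by (rule eventually_gt_at_top)
  then have bounds: "\<forall>\<^sub>F n in sequentially. 0 \<le> ?max n \<and> ?max n \<le> ?l2 n \<and> ?l2 n \<le> sqrt (?max n)"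
    by eventually_elim (use prob_vector_Max_le_l2[OF _ nonneg sum] in blast)
  show ?thesis
  proof
    assume "?max \<longlonglongrightarrow> 0"
    from tendsto_real_sqrt[OF this] have upper_0: "(\<lambda>n. sqrt (?max n)) \<longlonglongrightarrow> 0" by simp
    have lower: "\<forall>\<^sub>F n in sequentially. 0 \<le> ?l2 n" by (simp add: sum_nonneg)
    have upper: "\<forall>\<^sub>F n in sequentially. ?l2 n \<le> sqrt (?max n)"
      using bounds by (rule eventually_mono) blast
    show "?l2 \<longlonglongrightarrow> 0" by (rule tendsto_sandwich[OF lower upper tendsto_const upper_0])
  next
    assume upper_0: "?l2 \<longlonglongrightarrow> 0"
    have lower: "\<forall>\<^sub>F n in sequentially. 0 \<le> ?max n"
      and upper: "\<forall>\<^sub>F n in sequentially. ?max n \<le> ?l2 n"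
      using bounds by (auto elim: eventually_mono)
    show "?max \<longlonglongrightarrow> 0" by (rule tendsto_sandwich[OF lower upper tendsto_const upper_0])
  qed
qed

lemma conv_in_prob_gaussian_average_iff:
  fixes \<xi> :: "nat \<Rightarrow> nat \<Rightarrow> 'a \<Rightarrow> real" and w :: "nat \<Rightarrow> nat \<Rightarrow> real"
  assumes M: "prob_space M" and \<sigma>: "0 < \<sigma>"
    and indep: "\<And>n. prob_space.indep_vars M (\<lambda>_. borel) (\<xi> n) {..<n}"
    and normal: "\<And>n i. i < n \<Longrightarrow> distributed M lborel (\<xi> n i) (normal_density 0 \<sigma>)"
    and nonneg: "\<And>n j. 0 < n \<Longrightarrow> j < n \<Longrightarrow> 0 \<le> w n j"
    and sum: "\<And>n. 0 < n \<Longrightarrow> (\<Sum>j<n. w n j) = 1"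
    and Y: "\<And>n \<omega>. 0 < n \<Longrightarrow> Y n \<omega> = \<mu> + (\<Sum>j<n. w n j * \<xi> n j \<omega>)"
  shows "conv_in_prob M Y \<mu> \<longleftrightarrow> (\<lambda>n. MAX j\<in>{..<n}. w n j) \<longlonglongrightarrow> 0"
proof -
  define s where "s n = \<sigma> * sqrt (\<Sum>j<n. (w n j)\<^sup>2)" for n
  have "\<forall>\<^sub>F n in sequentially.
          0 < s n \<and> distributed M lborel (\<lambda>\<omega>. Y n \<omega> - \<mu>) (normal_density 0 (s n))"
    using eventually_gt_at_top[of 0]
  proof eventually_elim
    case (elim n)
    have "\<exists>j<n. w n j \<noteq> 0"
      using sum[OF elim] by (metis lessThan_iff sum.neutral zero_neq_one)
    then show ?case
      using weighted_sum_indep_normal[OF M \<sigma> indep normal] Y[OF elim] unfolding s_def by simp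
  qed
  then have "conv_in_prob M Y \<mu> \<longleftrightarrow> s \<longlonglongrightarrow> 0" by (rule conv_in_prob_normal_iff[OF M])
  also have "\<dots> \<longleftrightarrow> (\<lambda>n. sqrt (\<Sum>j<n. (w n j)\<^sup>2)) \<longlonglongrightarrow> 0"
    unfolding s_def using \<sigma> by simp
  also have "\<dots> \<longleftrightarrow> (\<lambda>n. MAX j\<in>{..<n}. w n j) \<longlonglongrightarrow> 0"
    by (rule prob_vectors_Max_tendsto_0_iff_l2[OF nonneg sum, symmetric])
  finally show ?thesis .
qed

section \<open>Wisdom\<close>

lemma norm1_of_nonneg:
  assumes "\<And>i j. i < n \<Longrightarrow> j < n \<Longrightarrow> 0 \<le> A i j"
  shows "norm1 n A = (MAX j\<in>{..<n}. \<Sum>i<n. A i j)"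
  unfolding norm1_def using assms by (intro arg_cong[where f = Max] image_cong sum.cong) auto

lemma ave_traj_conv_in_prob_iff:
  fixes \<xi> :: "nat \<Rightarrow> nat \<Rightarrow> 'a \<Rightarrow> real" and P :: "nat \<Rightarrow> nat \<Rightarrow> nat \<Rightarrow> real"
  assumes M: "prob_space M" and \<sigma>: "0 < \<sigma>"
    and indep: "\<And>n. prob_space.indep_vars M (\<lambda>_. borel) (\<xi> n) {..<n}"
    and normal: "\<And>n i. i < n \<Longrightarrow> distributed M lborel (\<xi> n i) (normal_density 0 \<sigma>)"
    and st: "\<And>n. stochastic n (P n)"
  shows "conv_in_prob M (\<lambda>n \<omega>. ave n (traj n (P n) (x0 \<mu> \<xi> n \<omega>) k)) \<mu>
     \<longleftrightarrow> (\<lambda>n. norm1 n (\<lambda>i j. mat_pow n (P n) k i j / real n)) \<longlonglongrightarrow> 0"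
proof -
  define w where "w n j = (\<Sum>i<n. mat_pow n (P n) k i j) / real n" for n j
  note powers = stochastic_mat_pow[OF st, unfolded stochastic_def]
  have nonneg: "0 \<le> w n j" if "j < n" for n j
    unfolding w_def using powers[of n k] that by (auto intro!: sum_nonneg divide_nonneg_nonneg)
  have "(\<Sum>j<n. w n j) = 1" if "0 < n" for n
    unfolding w_def sum_divide_distrib[symmetric] using powers that by (subst sum.swap) simp
  moreover have "ave n (traj n (P n) (x0 \<mu> \<xi> n \<omega>) k) = \<mu> + (\<Sum>j<n. w n j * \<xi> n j \<omega>)"
    if "0 < n" for n \<omega>
    unfolding x0_def w_def by (rule ave_traj_perturbed_constant[OF st that])
  ultimately have "conv_in_prob M (\<lambda>n \<omega>. ave n (traj n (P n) (x0 \<mu> \<xi> n \<omega>) k)) \<mu>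
      \<longleftrightarrow> (\<lambda>n. MAX j\<in>{..<n}. w n j) \<longlonglongrightarrow> 0"
    using nonneg by (intro conv_in_prob_gaussian_average_iff[OF M \<sigma> indep normal])
  also have "(\<lambda>n. MAX j\<in>{..<n}. w n j) = (\<lambda>n. norm1 n (\<lambda>i j. mat_pow n (P n) k i j / real n))"
    using powers by (subst norm1_of_nonneg) (auto simp: w_def sum_divide_distrib)
  finally show ?thesis .
qed

lemma lim_ave_traj_conv_in_prob_iff:
  fixes \<xi> :: "nat \<Rightarrow> nat \<Rightarrow> 'a \<Rightarrow> real" and P :: "nat \<Rightarrow> nat \<Rightarrow> nat \<Rightarrow> real"
  assumes M: "prob_space M" and \<sigma>: "0 < \<sigma>"
    and indep: "\<And>n. prob_space.indep_vars M (\<lambda>_. borel) (\<xi> n) {..<n}"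
    and normal: "\<And>n i. i < n \<Longrightarrow> distributed M lborel (\<xi> n i) (normal_density 0 \<sigma>)"
    and st: "\<And>n. stochastic n (P n)" and prim: "\<And>n. 0 < n \<Longrightarrow> primitive n (P n)"
  shows "conv_in_prob M (\<lambda>n \<omega>. lim (\<lambda>k. ave n (traj n (P n) (x0 \<mu> \<xi> n \<omega>) k))) \<mu>
     \<longleftrightarrow> (\<lambda>n. norm_inf_vec n (left_dom_eigvec n (P n))) \<longlonglongrightarrow> 0"
proof -
  define w where "w n = left_dom_eigvec n (P n)" for n
  have lim: "(\<lambda>k. mat_pow n (P n) k i j) \<longlonglongrightarrow> w n j" if "0 < n" "i < n" "j < n" for n i j
    unfolding w_def
    by (rule primitive_mat_pow_tendsto_left_dom_eigvec[OF st that(1) prim[OF that(1)] that(2,3)])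
  have distribution: "(\<forall>j<n. 0 \<le> w n j) \<and> (\<Sum>j<n. w n j) = 1" if "0 < n" for n
    using mat_pow_limit_distribution[OF st that lim[OF that]] .
  have "lim (\<lambda>k. ave n (traj n (P n) (x0 \<mu> \<xi> n \<omega>) k)) = \<mu> + (\<Sum>j<n. w n j * \<xi> n j \<omega>)"
    if "0 < n" for n \<omega>
  proof -
    have "lim (\<lambda>k. ave n (traj n (P n) (x0 \<mu> \<xi> n \<omega>) k)) = (\<Sum>j<n. w n j * (\<mu> + \<xi> n j \<omega>))"
      unfolding x0_def by (intro limI ave_traj_tendsto[OF that lim[OF that]])
    also have "\<dots> = \<mu> * (\<Sum>j<n. w n j) + (\<Sum>j<n. w n j * \<xi> n j \<omega>)"
      by (simp add: distrib_left sum.distrib sum_distrib_left mult.commute)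
    finally show ?thesis using distribution[OF that] by simp
  qed
  then have "conv_in_prob M (\<lambda>n \<omega>. lim (\<lambda>k. ave n (traj n (P n) (x0 \<mu> \<xi> n \<omega>) k))) \<mu>
      \<longleftrightarrow> (\<lambda>n. MAX j\<in>{..<n}. w n j) \<longlonglongrightarrow> 0"
    using distribution by (intro conv_in_prob_gaussian_average_iff[OF M \<sigma> indep normal]) auto
  also have "(\<lambda>n. MAX j\<in>{..<n}. w n j) = (\<lambda>n. norm_inf_vec n (left_dom_eigvec n (P n)))"
    unfolding norm_inf_vec_def w_def using distribution[unfolded w_def]
    by (intro ext arg_cong[where f = Max] image_cong) auto
  finally show ?thesis .
qed

theorem theorem1:
  fixes M :: "'a measure" and \<xi> :: "nat \<Rightarrow> nat \<Rightarrow> 'a \<Rightarrow> real"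
    and \<mu> \<sigma> :: real and P :: "nat \<Rightarrow> nat \<Rightarrow> nat \<Rightarrow> real"
  assumes "prob_space M"
    and "\<sigma> > 0"
    and "\<And>n. prob_space.indep_vars M (\<lambda>_. borel) (\<xi> n) {..<n}"
    and "\<And>n i. i < n \<Longrightarrow> distributed M lborel (\<xi> n i) (normal_density 0 \<sigma>)"
    and "\<And>n. stochastic n (P n)"
  shows "(one_time_wise M \<mu> \<xi> P \<longleftrightarrow>
            (\<lambda>n. norm1 n (\<lambda>i j. P n i j / real n)) \<longlonglongrightarrow> 0)
       \<and> (finite_time_wise M \<mu> \<xi> P \<longleftrightarrow>
            (\<forall>k. (\<lambda>n. norm1 n (\<lambda>i j. mat_pow n (P n) k i j / real n)) \<longlonglongrightarrow> 0))
       \<and> ((\<forall>n\<ge>1. primitive n (P n)) \<longrightarrow>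
            (wise M \<mu> \<xi> P \<longleftrightarrow>
              (\<lambda>n. norm_inf_vec n (left_dom_eigvec n (P n))) \<longlonglongrightarrow> 0))"
proof -
  note finite_time = ave_traj_conv_in_prob_iff[OF assms]
  have "one_time_wise M \<mu> \<xi> P \<longleftrightarrow> (\<lambda>n. norm1 n (\<lambda>i j. mat_pow n (P n) 1 i j / real n)) \<longlonglongrightarrow> 0"
    unfolding one_time_wise_def by (rule finite_time)
  also have "(\<lambda>n. norm1 n (\<lambda>i j. mat_pow n (P n) 1 i j / real n))
      = (\<lambda>n. norm1 n (\<lambda>i j. P n i j / real n))"
    by (rule ext, rule norm1_cong) (simp only: mat_pow_1)
  finally have "one_time_wise M \<mu> \<xi> P \<longleftrightarrow> (\<lambda>n. norm1 n (\<lambda>i j. P n i j / real n)) \<longlonglongrightarrow> 0" .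
  moreover have "wise M \<mu> \<xi> P \<longleftrightarrow> (\<lambda>n. norm_inf_vec n (left_dom_eigvec n (P n))) \<longlonglongrightarrow> 0"
    if "\<forall>n\<ge>1. primitive n (P n)"
    unfolding wise_def using that by (intro lim_ave_traj_conv_in_prob_iff[OF assms]) auto
  ultimately show ?thesis
    unfolding finite_time_wise_def using finite_time by blast
qed

end
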